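(* Let $H=\sum_ic_iP_i$ be a Pauli Hamiltonian, $|\psi\rangle$ a state, $\mathcal{G}=(G^{[1]},\dots,G^{[m]})$ a grouping of $H$ and $\mathcal{R}=(G'^{[1]},\dots,G'^{[m]})$ a repacking of $\mathcal{G}$. Fix positive shot counts $M_1,\dots,M_m$ such that $G^{[j]}$ and $G'^{[j]}$ are each measured $M_j$ times. Define $\mathrm{Var}^*(\mathcal{G})=\min_w\mathrm{Var}(\overline{E}_{\mathcal{G}}(w))$ and $\mathrm{Var}^*(\mathcal{R})=\min_w\mathrm{Var}(\overline{E}_{\mathcal{R}}(w))$, where the variances are the exact variances (including all within-group covariances). Then $\mathrm{Var}^*(\mathcal{R})\le\mathrm{Var}^*(\mathcal{G})$.
   Context: A Pauli Hamiltonian is $H=\sum_{i=1}^Nc_iP_i$ with real nonzero $c_i$ and distinct $n$-qubit Pauli strings. A grouping is a list of pairwise disjoint sets of mutually commuting Pauli terms of $H$ covering all terms; an overlapped grouping drops disjointness; a repacking of $(G^{[1]},\dots,G^{[m]})$ is an overlapped grouping $(G'^{[1]},\dots,G'^{[m]})$ with $G^{[j]}\subseteq G'^{[j]}$. Measurement model: group $j$ is measured in $M_j$ independent shots, each giving simultaneous $\pm1$ outcomes of all its operators with the Born-rule distribution for $|\psi\rangle$; different groups use independent shots. For an (overlapped) grouping $\mathcal{S}$, $\Gamma_{\mathcal{S}}(i)=\{j:P_i\in \text{group } j\}$, $\overline{\langle P_i\rangle}_{(j)}$ is the sample mean of $P_i$ over group $j$'s shots, and $\overline{E}_{\mathcal{S}}(w)=\sum_ic_i\sum_{j\in\Gamma_{\mathcal{S}}(i)}w_{i,j}\overline{\langle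 P_i\rangle}_{(j)}$ with real weights satisfying $\sum_{j\in\Gamma_{\mathcal{S}}(i)}w_{i,j}=1$ for each $i$; the minimum is over all such weights. *)

theory Defs
  imports "Jordan_Normal_Form.Matrix" "HOL-Library.FuncSet"
begin

datatype pauli = PI | PX | PY | PZ

text \<open>Single-qubit Pauli matrix entries, rows/columns indexed by bits (False = 0, True = 1).\<close>
fun pauli_entry :: "pauli \<Rightarrow> bool \<Rightarrow> bool \<Rightarrow> complex" where
  "pauli_entry PI r c = (if r = c then 1 else 0)"
| "pauli_entry PX r c = (if r \<noteq> c then 1 else 0)"
| "pauli_entry PY r c = (if r = c then 0 else if r then \<i> else - \<i>)"
| "pauli_entry PZ r c = (if r \<noteq> c then 0 else if r then -1 else 1)"

text \<open>An n-qubit Pauli string is a list of length n; its matrix is the tensor product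
  of the single-qubit factors, acting on C^(2^n) (qubit k = bit k of the basis index).\<close>
definition pauli_mat :: "pauli list \<Rightarrow> complex mat" where
  "pauli_mat p = mat (2 ^ length p) (2 ^ length p)
     (\<lambda>(r, c). \<Prod>k<length p. pauli_entry (p ! k) (odd (r div 2 ^ k)) (odd (c div 2 ^ k)))"

definition commute :: "pauli list \<Rightarrow> pauli list \<Rightarrow> bool" where
  "commute p q \<longleftrightarrow> pauli_mat p * pauli_mat q = pauli_mat q * pauli_mat p"

definition pauli_hamiltonian :: "nat \<Rightarrow> nat \<Rightarrow> (nat \<Rightarrow> real) \<Rightarrow> (nat \<Rightarrow> pauli list) \<Rightarrow> bool" where
  "pauli_hamiltonian n N c P \<longleftrightarrow>
     (\<forall>i<N. c i \<noteq> 0 \<and> length (P i) = n) \<and> inj_on P {..<N}"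

definition commuting_group :: "nat \<Rightarrow> (nat \<Rightarrow> pauli list) \<Rightarrow> nat set \<Rightarrow> bool" where
  "commuting_group N P S \<longleftrightarrow> S \<subseteq> {..<N} \<and> (\<forall>i\<in>S. \<forall>k\<in>S. commute (P i) (P k))"

definition overlapped_grouping :: "nat \<Rightarrow> (nat \<Rightarrow> pauli list) \<Rightarrow> nat \<Rightarrow> (nat \<Rightarrow> nat set) \<Rightarrow> bool" where
  "overlapped_grouping N P m S \<longleftrightarrow>
     (\<forall>j<m. commuting_group N P (S j)) \<and> (\<Union>j<m. S j) = {..<N}"

definition grouping :: "nat \<Rightarrow> (nat \<Rightarrow> pauli list) \<Rightarrow> nat \<Rightarrow> (nat \<Rightarrow> nat set) \<Rightarrow> bool" where
  "grouping N P m S \<longleftrightarrow> overlapped_grouping N P m S \<and>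
     (\<forall>j<m. \<forall>j'<m. j \<noteq> j' \<longrightarrow> S j \<inter> S j' = {})"

definition repacking :: "nat \<Rightarrow> (nat \<Rightarrow> pauli list) \<Rightarrow> nat \<Rightarrow> (nat \<Rightarrow> nat set) \<Rightarrow> (nat \<Rightarrow> nat set) \<Rightarrow> bool" where
  "repacking N P m G R \<longleftrightarrow> overlapped_grouping N P m R \<and> (\<forall>j<m. G j \<subseteq> R j)"

definition Gamma :: "nat \<Rightarrow> (nat \<Rightarrow> nat set) \<Rightarrow> nat \<Rightarrow> nat set" where
  "Gamma m S i = {j. j < m \<and> i \<in> S j}"

definition sgn_of :: "bool \<Rightarrow> real" where
  "sgn_of b = (if b then 1 else -1)"

definition expval :: "complex vec \<Rightarrow> complex mat \<Rightarrow> complex" where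
  "expval psi A = (A *\<^sub>v psi) \<bullet>c psi"

text \<open>Born-rule probability that a single shot of the simultaneous measurement of the
  commuting operators P_i, i in S, yields outcome (-1)^(not s i) for each i:
  <psi| prod_{i in S} (I + s_i P_i)/2 |psi>.  (The factors commute, so the order of the
  product, here increasing index order, is irrelevant.)\<close>
definition born_prob :: "nat \<Rightarrow> (nat \<Rightarrow> pauli list) \<Rightarrow> complex vec \<Rightarrow> nat set \<Rightarrow> (nat \<Rightarrow> bool) \<Rightarrow> real" where
  "born_prob n P psi S s = Re (expval psi
     (foldr (\<lambda>i A. ((1/2 :: complex) \<cdot>\<^sub>m (1\<^sub>m (2^n) + complex_of_real (sgn_of (s i)) \<cdot>\<^sub>m pauli_mat (P i))) * A)
        (sorted_list_of_set S) (1\<^sub>m (2^n))))"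

text \<open>Sample space of the whole experiment: for every group j < m, every shot t < M j,
  the outcome signs of all operators in group j.\<close>
definition outcomes :: "nat \<Rightarrow> (nat \<Rightarrow> nat set) \<Rightarrow> (nat \<Rightarrow> nat) \<Rightarrow> (nat \<Rightarrow> nat \<Rightarrow> nat \<Rightarrow> bool) set" where
  "outcomes m S M = PiE {..<m} (\<lambda>j. PiE {..<M j} (\<lambda>t. PiE (S j) (\<lambda>i. (UNIV :: bool set))))"

definition outcome_prob :: "nat \<Rightarrow> (nat \<Rightarrow> pauli list) \<Rightarrow> complex vec \<Rightarrow> nat \<Rightarrow> (nat \<Rightarrow> nat set) \<Rightarrow> (nat \<Rightarrow> nat)
    \<Rightarrow> (nat \<Rightarrow> nat \<Rightarrow> nat \<Rightarrow> bool) \<Rightarrow> real" where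
  "outcome_prob n P psi m S M \<omega> = (\<Prod>j<m. \<Prod>t<M j. born_prob n P psi (S j) (\<omega> j t))"

definition sample_mean :: "(nat \<Rightarrow> nat) \<Rightarrow> (nat \<Rightarrow> nat \<Rightarrow> nat \<Rightarrow> bool) \<Rightarrow> nat \<Rightarrow> nat \<Rightarrow> real" where
  "sample_mean M \<omega> i j = (\<Sum>t<M j. sgn_of (\<omega> j t i)) / real (M j)"

definition estimator :: "nat \<Rightarrow> (nat \<Rightarrow> real) \<Rightarrow> nat \<Rightarrow> (nat \<Rightarrow> nat set) \<Rightarrow> (nat \<Rightarrow> nat)
    \<Rightarrow> (nat \<Rightarrow> nat \<Rightarrow> real) \<Rightarrow> (nat \<Rightarrow> nat \<Rightarrow> nat \<Rightarrow> bool) \<Rightarrow> real" where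
  "estimator N c m S M w \<omega> = (\<Sum>i<N. c i * (\<Sum>j\<in>Gamma m S i. w i j * sample_mean M \<omega> i j))"

definition est_variance :: "nat \<Rightarrow> nat \<Rightarrow> (nat \<Rightarrow> real) \<Rightarrow> (nat \<Rightarrow> pauli list) \<Rightarrow> complex vec
    \<Rightarrow> nat \<Rightarrow> (nat \<Rightarrow> nat set) \<Rightarrow> (nat \<Rightarrow> nat) \<Rightarrow> (nat \<Rightarrow> nat \<Rightarrow> real) \<Rightarrow> real" where
  "est_variance n N c P psi m S M w =
    (let \<Omega> = outcomes m S M;
         p = outcome_prob n P psi m S M;
         X = estimator N c m S M w;
         mu = (\<Sum>\<omega>\<in>\<Omega>. p \<omega> * X \<omega>)
     in (\<Sum>\<omega>\<in>\<Omega>. p \<omega> * (X \<omega> - mu)\<^sup>2))"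

definition admissible_weights :: "nat \<Rightarrow> nat \<Rightarrow> (nat \<Rightarrow> nat set) \<Rightarrow> (nat \<Rightarrow> nat \<Rightarrow> real) \<Rightarrow> bool" where
  "admissible_weights N m S w \<longleftrightarrow> (\<forall>i<N. (\<Sum>j\<in>Gamma m S i. w i j) = 1)"

text \<open>Var^*(S) = minimum (infimum; the minimum is attained) of the variance over admissible weights.\<close>
definition opt_variance :: "nat \<Rightarrow> nat \<Rightarrow> (nat \<Rightarrow> real) \<Rightarrow> (nat \<Rightarrow> pauli list) \<Rightarrow> complex vec
    \<Rightarrow> nat \<Rightarrow> (nat \<Rightarrow> nat set) \<Rightarrow> (nat \<Rightarrow> nat) \<Rightarrow> real" where
  "opt_variance n N c P psi m S M =
     (INF w \<in> {w. admissible_weights N m S w}. est_variance n N c P psi m S M w)"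

end

theory Submission
  imports Defs
begin

text \<open>Weights for the grouping \<open>G\<close> become admissible weights for the repacking \<open>R\<close> by
  giving weight zero to every term of \<open>R j\<close> that is not in \<open>G j\<close>. The resulting estimator
  only reads, in each shot of group \<open>j\<close>, the outcomes of the operators in \<open>G j\<close>, and the Born
  rule is consistent under marginalisation: summing the probability of a joint outcome of the
  commuting operators in \<open>R j\<close> over the outcomes of an extra operator \<open>P\<^sub>a\<close> gives the
  probability for the smaller group, because the spectral projectors \<open>(I + P\<^sub>a)/2\<close> and
  \<open>(I - P\<^sub>a)/2\<close> sum to the identity. So the estimator has the same distribution, hence the
  same variance, under both measurement schemes, and the infimum over the larger set of
  weights for \<open>R\<close> is at most the one for \<open>G\<close>. That infimum is over a set bounded below by 0,
  since Born probabilities are expectation values of products of commuting orthogonal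
  projections and hence nonnegative.\<close>

lemma nat_eq_if_low_bits_eq:
  fixes r c :: nat
  assumes "r < 2^n" "c < 2^n" "\<forall>k<n. odd (r div 2^k) = odd (c div 2^k)"
  shows "r = c"
proof (rule bit_eqI)
  fix k
  show "bit r k = bit c k"
  proof (cases "k < n")
    case True
    then show ?thesis using assms(3) by (simp add: bit_iff_odd)
  next
    case False
    then have "r < 2^k" "c < 2^k"
      using assms(1,2) by (meson order_less_le_trans not_less one_le_numeral power_increasing)+
    then show ?thesis by (simp add: bit_iff_odd)
  qed
qed

lemma bij_betw_low_bits:
  "bij_betw (\<lambda>x::nat. \<lambda>k\<in>{..<n}. odd (x div 2^k)) {..<(2::nat)^n} (PiE {..<n} (\<lambda>_. UNIV))"
proof -
  let ?b = "\<lambda>x::nat. \<lambda>k\<in>{..<n}. odd (x div 2^k)"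
  have "inj_on ?b {..<2^n}"
  proof (rule inj_onI)
    fix x y assume "x \<in> {..<2^n}" "y \<in> {..<2^n}" and eq: "?b x = ?b y"
    moreover have "odd (x div 2^k) = odd (y div 2^k)" if "k < n" for k
      using fun_cong[OF eq, of k] that by simp
    ultimately show "x = y" by (intro nat_eq_if_low_bits_eq[of x n y]) auto
  qed
  moreover have "?b ` {..<2^n} = PiE {..<n} (\<lambda>_. UNIV)"
  proof (rule card_subset_eq)
    show "finite (PiE {..<n} (\<lambda>_. UNIV :: bool set))" by (simp add: finite_PiE)
    show "?b ` {..<2^n} \<subseteq> PiE {..<n} (\<lambda>_. UNIV)" by auto
    show "card (?b ` {..<2^n}) = card (PiE {..<n} (\<lambda>_. UNIV :: bool set))"
      using card_image[OF \<open>inj_on ?b {..<2^n}\<close>] by (simp add: card_PiE)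
  qed
  ultimately show ?thesis unfolding bij_betw_def ..
qed

lemma sum_prod_low_bits:
  fixes f :: "nat \<Rightarrow> bool \<Rightarrow> 'a::comm_semiring_1"
  shows "(\<Sum>x<(2::nat)^n. \<Prod>k<n. f k (odd (x div 2^k))) = (\<Prod>k<n. f k False + f k True)"
proof -
  let ?F = "\<lambda>g. \<Prod>k<n. f k (g k)"
  have "(\<Sum>x<(2::nat)^n. \<Prod>k<n. f k (odd (x div 2^k)))
      = (\<Sum>x<(2::nat)^n. ?F (\<lambda>k\<in>{..<n}. odd (x div 2^k)))"
    by (intro sum.cong[OF refl] prod.cong[OF refl]) simp
  also have "\<dots> = (\<Sum>g\<in>PiE {..<n} (\<lambda>_. UNIV). ?F g)"
    by (rule sum.reindex_bij_betw[OF bij_betw_low_bits])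
  also have "\<dots> = (\<Prod>k<n. \<Sum>b\<in>UNIV. f k b)"
    by (rule prod_sum_PiE[symmetric]) auto
  finally show ?thesis by (simp add: UNIV_bool add.commute)
qed

section \<open>Hermitian matrices and sign projectors\<close>

definition hermitian :: "complex mat \<Rightarrow> bool" where
  "hermitian A \<longleftrightarrow> (\<forall>i<dim_row A. \<forall>j<dim_col A. A $$ (i, j) = cnj (A $$ (j, i)))"

lemma hermitianI:
  assumes "A \<in> carrier_mat d d" and "\<And>i j. i < d \<Longrightarrow> j < d \<Longrightarrow> A $$ (i, j) = cnj (A $$ (j, i))"
  shows "hermitian A"
  using assms unfolding hermitian_def by (metis carrier_matD(1,2))

lemma hermitianD:
  assumes "hermitian A" and "A \<in> carrier_mat d d" and "i < d" and "j < d"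
  shows "cnj (A $$ (j, i)) = A $$ (i, j)"
  using assms unfolding hermitian_def by (metis carrier_matD(1,2) complex_cnj_cnj)

lemma hermitian_one: "hermitian (1\<^sub>m d)"
  by (rule hermitianI[of _ d]) auto

lemma hermitian_mult_commuting:
  assumes A: "A \<in> carrier_mat d d" and B: "B \<in> carrier_mat d d"
    and "hermitian A" and "hermitian B" and comm: "A * B = B * A"
  shows "hermitian (A * B)"
proof (rule hermitianI[of _ d])
  show "A * B \<in> carrier_mat d d" using A B by simp
  fix i j assume i: "i < d" and j: "j < d"
  have "cnj ((A * B) $$ (j, i)) = (\<Sum>k<d. cnj (A $$ (j, k)) * cnj (B $$ (k, i)))"
    using A B i j by (simp add: scalar_prod_def atLeast0LessThan)
  also have "\<dots> = (\<Sum>k<d. B $$ (i, k) * A $$ (k, j))"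
    using hermitianD[OF \<open>hermitian A\<close> A] hermitianD[OF \<open>hermitian B\<close> B] i j
    by (auto simp: mult.commute intro!: sum.cong)
  also have "\<dots> = (B * A) $$ (i, j)"
    using A B i j by (simp add: scalar_prod_def atLeast0LessThan)
  finally show "(A * B) $$ (i, j) = cnj ((A * B) $$ (j, i))" using comm by simp
qed

lemma hermitian_inner_prod_mult_mat_vec:
  assumes A: "A \<in> carrier_mat d d" and "hermitian A"
    and v: "v \<in> carrier_vec d" and w: "w \<in> carrier_vec d"
  shows "(A *\<^sub>v v) \<bullet>c w = v \<bullet>c (A *\<^sub>v w)"
proof -
  have "(A *\<^sub>v v) \<bullet>c w = (\<Sum>i<d. (\<Sum>j<d. A $$ (i, j) * v $ j) * cnj (w $ i))"
    using A v w by (simp add: scalar_prod_def atLeast0LessThan)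
  also have "\<dots> = (\<Sum>j<d. \<Sum>i<d. A $$ (i, j) * v $ j * cnj (w $ i))"
    by (subst sum.swap) (simp add: sum_distrib_right)
  also have "\<dots> = (\<Sum>j<d. v $ j * (\<Sum>i<d. cnj (A $$ (j, i) * w $ i)))"
    unfolding sum_distrib_left
  proof (intro sum.cong refl)
    fix i j assume "i \<in> {..<d}" "j \<in> {..<d}"
    then show "A $$ (i, j) * v $ j * cnj (w $ i) = v $ j * cnj (A $$ (j, i) * w $ i)"
      using hermitianD[OF \<open>hermitian A\<close> A, of i j] by simp
  qed
  also have "\<dots> = v \<bullet>c (A *\<^sub>v w)"
    using A v w by (simp add: scalar_prod_def atLeast0LessThan)
  finally show ?thesis .
qed

lemma hermitian_idempotent_expval_nonneg:
  assumes Q: "Q \<in> carrier_mat d d" and "hermitian Q" and idem: "Q * Q = Q"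
    and psi: "psi \<in> carrier_vec d"
  shows "0 \<le> Re (expval psi Q)"
proof -
  have "expval psi Q = (Q *\<^sub>v (Q *\<^sub>v psi)) \<bullet>c psi"
    unfolding expval_def by (subst idem[symmetric]) (use Q psi in simp)
  also have "\<dots> = (Q *\<^sub>v psi) \<bullet>c (Q *\<^sub>v psi)"
    using Q psi by (intro hermitian_inner_prod_mult_mat_vec[OF Q \<open>hermitian Q\<close>]) auto
  finally show ?thesis
    using conjugate_square_ge_0_vec[of "Q *\<^sub>v psi"] by (simp add: less_eq_complex_def)
qed

lemma expval_add:
  assumes "A \<in> carrier_mat d d" and "B \<in> carrier_mat d d" and "psi \<in> carrier_vec d"
  shows "expval psi (A + B) = expval psi A + expval psi B"
  unfolding expval_def using assms
  by (simp add: add_mult_distrib_mat_vec[of _ d d] add_scalar_prod_distrib[of _ d])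

lemma smult_mult_smult_mat:
  assumes X: "(X :: 'a::comm_ring mat) \<in> carrier_mat nr n" and Y: "Y \<in> carrier_mat n nc"
  shows "(a \<cdot>\<^sub>m X) * (b \<cdot>\<^sub>m Y) = (a * b) \<cdot>\<^sub>m (X * Y)"
  using X Y
  by (simp add: mult_smult_assoc_mat[of _ nr n _ nc] mult_smult_distrib[of _ nr n _ nc])
    (rule eq_matI, auto simp: ac_simps)

lemma one_plus_smult_mult:
  assumes A: "(A :: complex mat) \<in> carrier_mat d d" and B: "B \<in> carrier_mat d d"
  shows "(1\<^sub>m d + s \<cdot>\<^sub>m A) * (1\<^sub>m d + t \<cdot>\<^sub>m B) = 1\<^sub>m d + s \<cdot>\<^sub>m A + (t \<cdot>\<^sub>m B + (s * t) \<cdot>\<^sub>m (A * B))"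
  using A B
  by (simp add: add_mult_distrib_mat[of _ d d _ _ d] mult_add_distrib_mat[of _ d d _ d]
      smult_mult_smult_mat[of _ d d _ d])

definition sign_projector :: "nat \<Rightarrow> complex mat \<Rightarrow> bool \<Rightarrow> complex mat" where
  "sign_projector d A b = (1/2) \<cdot>\<^sub>m (1\<^sub>m d + complex_of_real (sgn_of b) \<cdot>\<^sub>m A)"

lemma sign_projector_carrier: "A \<in> carrier_mat d d \<Longrightarrow> sign_projector d A b \<in> carrier_mat d d"
  unfolding sign_projector_def by simp

lemma sign_projector_hermitian:
  assumes A: "A \<in> carrier_mat d d" and "hermitian A"
  shows "hermitian (sign_projector d A b)"
proof (rule hermitianI[OF sign_projector_carrier[OF A]])
  fix i j assume "i < d" "j < d"
  then show "sign_projector d A b $$ (i, j) = cnj (sign_projector d A b $$ (j, i))"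
    using hermitianD[OF \<open>hermitian A\<close> A, of i j] A unfolding sign_projector_def by auto
qed

lemma sign_projectors_sum:
  "A \<in> carrier_mat d d \<Longrightarrow> sign_projector d A True + sign_projector d A False = 1\<^sub>m d"
  unfolding sign_projector_def sgn_of_def by (intro eq_matI) (auto simp: field_simps)

lemma sign_projector_idempotent:
  assumes A: "A \<in> carrier_mat d d" and AA: "A * A = 1\<^sub>m d"
  shows "sign_projector d A b * sign_projector d A b = sign_projector d A b"
proof -
  define s where "s = complex_of_real (sgn_of b)"
  have "s * s = 1" unfolding s_def sgn_of_def by simp
  then have "(1\<^sub>m d + s \<cdot>\<^sub>m A) * (1\<^sub>m d + s \<cdot>\<^sub>m A) = 2 \<cdot>\<^sub>m (1\<^sub>m d + s \<cdot>\<^sub>m A)"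
    using A unfolding one_plus_smult_mult[OF A A] AA by (intro eq_matI) auto
  then show ?thesis
    using A unfolding sign_projector_def s_def[symmetric]
    by (simp add: smult_mult_smult_mat[of _ d d _ d]) (rule eq_matI, auto)
qed

lemma sign_projectors_commute:
  assumes A: "A \<in> carrier_mat d d" and B: "B \<in> carrier_mat d d" and AB: "A * B = B * A"
  shows "sign_projector d A a * sign_projector d B b = sign_projector d B b * sign_projector d A a"
proof -
  define s t where "s = complex_of_real (sgn_of a)" and "t = complex_of_real (sgn_of b)"
  have "(1\<^sub>m d + s \<cdot>\<^sub>m A) * (1\<^sub>m d + t \<cdot>\<^sub>m B) = (1\<^sub>m d + t \<cdot>\<^sub>m B) * (1\<^sub>m d + s \<cdot>\<^sub>m A)"
    using A B unfolding one_plus_smult_mult[OF A B] one_plus_smult_mult[OF B A] AB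
    by (intro eq_matI) auto
  then show ?thesis
    using A B unfolding sign_projector_def s_def[symmetric] t_def[symmetric]
    by (simp add: smult_mult_smult_mat[of _ d d _ d])
qed

lemma pauli_mat_carrier: "pauli_mat p \<in> carrier_mat (2^length p) (2^length p)"
  unfolding pauli_mat_def by simp

lemma pauli_entry_square:
  "(\<Sum>b\<in>UNIV. pauli_entry a r b * pauli_entry a b c) = (if r = c then 1 else 0)"
  by (cases a; cases r; cases c) (simp_all add: UNIV_bool)

lemma pauli_mat_square: "pauli_mat p * pauli_mat p = 1\<^sub>m (2^length p)"
proof (rule eq_matI)
  fix r c assume rc: "r < dim_row (1\<^sub>m (2^length p))" "c < dim_col (1\<^sub>m (2^length p))"
  let ?n = "length p"
  let ?e = "\<lambda>k. pauli_entry (p ! k)"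
  let ?bit = "\<lambda>x k. odd (x div 2^k)"
  have "(pauli_mat p * pauli_mat p) $$ (r, c)
      = (\<Sum>x<(2::nat)^?n. \<Prod>k<?n. ?e k (?bit r k) (?bit x k) * ?e k (?bit x k) (?bit c k))"
    using rc unfolding pauli_mat_def by (simp add: scalar_prod_def atLeast0LessThan prod.distrib)
  also have "\<dots> = (\<Prod>k<?n. ?e k (?bit r k) False * ?e k False (?bit c k)
                                + ?e k (?bit r k) True * ?e k True (?bit c k))"
    by (rule sum_prod_low_bits)
  also have "\<dots> = (\<Prod>k<?n. if ?bit r k = ?bit c k then 1 else 0)"
    using pauli_entry_square by (simp add: UNIV_bool)
  also have "\<dots> = (if r = c then 1 else 0)"
  proof (cases "r = c")
    case False
    then obtain k where "k < ?n" "?bit r k \<noteq> ?bit c k"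
      using nat_eq_if_low_bits_eq[of r ?n c] rc by auto
    then have "(\<Prod>k<?n. if ?bit r k = ?bit c k then 1 else 0) = (0::complex)"
      by (intro prod_zero) auto
    then show ?thesis using False by simp
  qed simp
  finally show "(pauli_mat p * pauli_mat p) $$ (r, c) = 1\<^sub>m (2^length p) $$ (r, c)"
    using rc by simp
qed (auto simp: pauli_mat_def)

lemma pauli_entry_cnj: "cnj (pauli_entry a r c) = pauli_entry a c r"
  by (cases a; cases r; cases c) simp_all

lemma pauli_mat_hermitian: "hermitian (pauli_mat p)"
  unfolding hermitian_def pauli_mat_def by (simp add: pauli_entry_cnj)

lemma pauli_sign_projector_carrier:
  "length p = n \<Longrightarrow> sign_projector (2^n) (pauli_mat p) b \<in> carrier_mat (2^n) (2^n)"
  using sign_projector_carrier[OF pauli_mat_carrier] by blast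

lemma pauli_sign_projector_hermitian: "hermitian (sign_projector (2^length p) (pauli_mat p) b)"
  by (rule sign_projector_hermitian[OF pauli_mat_carrier pauli_mat_hermitian])

lemma pauli_sign_projector_idempotent:
  "sign_projector (2^length p) (pauli_mat p) b * sign_projector (2^length p) (pauli_mat p) b
     = sign_projector (2^length p) (pauli_mat p) b"
  by (rule sign_projector_idempotent[OF pauli_mat_carrier pauli_mat_square])

lemma pauli_sign_projectors_commute:
  assumes "length p = n" and "length q = n" and "commute p q"
  shows "sign_projector (2^n) (pauli_mat p) a * sign_projector (2^n) (pauli_mat q) b
       = sign_projector (2^n) (pauli_mat q) b * sign_projector (2^n) (pauli_mat p) a"
  using assms pauli_mat_carrier[of p] pauli_mat_carrier[of q]
  by (intro sign_projectors_commute) (auto simp: commute_def)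

section \<open>Born probabilities of commuting families\<close>

definition commuting_family :: "nat \<Rightarrow> (nat \<Rightarrow> pauli list) \<Rightarrow> nat set \<Rightarrow> bool" where
  "commuting_family n P S \<longleftrightarrow>
     finite S \<and> (\<forall>i\<in>S. length (P i) = n) \<and> (\<forall>i\<in>S. \<forall>k\<in>S. commute (P i) (P k))"

lemma commuting_family_subset: "commuting_family n P T \<Longrightarrow> S \<subseteq> T \<Longrightarrow> commuting_family n P S"
  unfolding commuting_family_def by (auto intro: finite_subset)

lemma foldr_mult_carrier:
  "\<forall>i\<in>set l. F i \<in> carrier_mat d d \<Longrightarrow> foldr (\<lambda>i A. F i * A) l (1\<^sub>m d) \<in> carrier_mat d d"
  by (induction l) auto

lemma foldr_mult_insort:
  assumes "\<forall>i\<in>set l. F i \<in> carrier_mat d d" and Fa: "F a \<in> carrier_mat d d"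
    and "\<forall>i\<in>set l. F a * F i = F i * F a"
  shows "foldr (\<lambda>i A. F i * A) (insort a l) (1\<^sub>m d) = F a * foldr (\<lambda>i A. F i * A) l (1\<^sub>m d)"
  using assms
proof (induction l)
  case (Cons x l)
  let ?Q = "foldr (\<lambda>i A. F i * A) l (1\<^sub>m d)"
  have Fx: "F x \<in> carrier_mat d d" and Q: "?Q \<in> carrier_mat d d"
    using Cons.prems(1) foldr_mult_carrier[of l F d] by auto
  have comm: "F x * F a = F a * F x" using Cons.prems(3) by simp
  have "F x * (F a * ?Q) = (F x * F a) * ?Q"
    using assoc_mult_mat[OF Fx Fa Q] by simp
  also have "\<dots> = F a * (F x * ?Q)"
    unfolding comm using assoc_mult_mat[OF Fa Fx Q] .
  finally show ?case using Cons by simp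
qed simp

definition born_projector :: "nat \<Rightarrow> (nat \<Rightarrow> pauli list) \<Rightarrow> nat set \<Rightarrow> (nat \<Rightarrow> bool) \<Rightarrow> complex mat" where
  "born_projector n P S s = foldr (\<lambda>i A. sign_projector (2^n) (pauli_mat (P i)) (s i) * A)
     (sorted_list_of_set S) (1\<^sub>m (2^n))"

lemma born_prob_eq_expval: "born_prob n P psi S s = Re (expval psi (born_projector n P S s))"
  unfolding born_prob_def born_projector_def sign_projector_def ..

lemma born_projector_empty: "born_projector n P {} s = 1\<^sub>m (2^n)"
  unfolding born_projector_def by simp

lemma born_projector_insert:
  assumes "commuting_family n P (insert a S)" and "a \<notin> S"
  shows "born_projector n P (insert a S) s
       = sign_projector (2^n) (pauli_mat (P a)) (s a) * born_projector n P S s"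
proof -
  have "finite S" using assms(1) unfolding commuting_family_def by simp
  then show ?thesis
    using assms unfolding born_projector_def commuting_family_def
    by (simp add: sorted_list_of_set_insert foldr_mult_insort pauli_sign_projector_carrier
        pauli_sign_projectors_commute)
qed

lemma born_projector_cong:
  "finite S \<Longrightarrow> (\<And>i. i \<in> S \<Longrightarrow> s i = s' i) \<Longrightarrow> born_projector n P S s = born_projector n P S s'"
  unfolding born_projector_def by (intro foldr_cong) auto

lemma born_projector_carrier:
  "commuting_family n P S \<Longrightarrow> born_projector n P S s \<in> carrier_mat (2^n) (2^n)"
  unfolding born_projector_def commuting_family_def
  by (intro foldr_mult_carrier) (simp add: pauli_sign_projector_carrier)

lemma born_projector_commute:
  assumes "commuting_family n P S" and C: "C \<in> carrier_mat (2^n) (2^n)"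
    and comm: "\<forall>i\<in>S. C * sign_projector (2^n) (pauli_mat (P i)) (s i)
                     = sign_projector (2^n) (pauli_mat (P i)) (s i) * C"
  shows "C * born_projector n P S s = born_projector n P S s * C"
proof -
  have "finite S" using assms(1) unfolding commuting_family_def by simp
  then show ?thesis
    using assms(1) comm
  proof (induction S rule: finite_induct)
    case (insert a S)
    let ?E = "sign_projector (2^n) (pauli_mat (P a)) (s a)"
    let ?Q = "born_projector n P S s"
    have fam: "commuting_family n P S"
      using insert.prems(1) by (rule commuting_family_subset) auto
    have E: "?E \<in> carrier_mat (2^n) (2^n)"
      using insert.prems(1) by (intro pauli_sign_projector_carrier) (simp add: commuting_family_def)
    have Q: "?Q \<in> carrier_mat (2^n) (2^n)" using fam by (rule born_projector_carrier)
    have CQ: "C * ?Q = ?Q * C" using insert.IH[OF fam] insert.prems(2) by simp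
    have CE: "C * ?E = ?E * C" using insert.prems(2) by simp
    have "C * (?E * ?Q) = ?E * (C * ?Q)"
      using assoc_mult_mat[OF C E Q] assoc_mult_mat[OF E C Q] CE by simp
    also have "\<dots> = (?E * ?Q) * C"
      using assoc_mult_mat[OF E Q C] CQ by simp
    finally show ?case
      using insert.prems(1) insert.hyps(2) by (simp add: born_projector_insert)
  qed (use C in \<open>simp add: born_projector_empty\<close>)
qed

lemma born_projector_hermitian_idempotent:
  assumes "commuting_family n P S"
  shows "hermitian (born_projector n P S s)
    \<and> born_projector n P S s * born_projector n P S s = born_projector n P S s"
proof -
  have "finite S" using assms unfolding commuting_family_def by simp
  then show ?thesis
    using assms
  proof (induction S rule: finite_induct)
    case empty
    show ?case by (simp add: born_projector_empty hermitian_one)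
  next
    case (insert a S)
    let ?E = "sign_projector (2^n) (pauli_mat (P a)) (s a)"
    let ?Q = "born_projector n P S s"
    have fam: "commuting_family n P S"
      using insert.prems by (rule commuting_family_subset) auto
    have len: "length (P a) = n" using insert.prems by (simp add: commuting_family_def)
    have E: "?E \<in> carrier_mat (2^n) (2^n)" using len by (rule pauli_sign_projector_carrier)
    have Q: "?Q \<in> carrier_mat (2^n) (2^n)" using fam by (rule born_projector_carrier)
    have EQ: "?E * ?Q = ?Q * ?E"
    proof (rule born_projector_commute[OF fam E], intro ballI)
      fix i assume "i \<in> S"
      then show "?E * sign_projector (2^n) (pauli_mat (P i)) (s i)
          = sign_projector (2^n) (pauli_mat (P i)) (s i) * ?E"
        using insert.prems unfolding commuting_family_def
        by (intro pauli_sign_projectors_commute) auto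
    qed
    have EE: "?E * ?E = ?E" using pauli_sign_projector_idempotent[of "P a"] len by simp
    have "hermitian (?E * ?Q)"
      using pauli_sign_projector_hermitian[of "P a"] len insert.IH[OF fam]
      by (intro hermitian_mult_commuting[OF E Q _ _ EQ]) auto
    moreover have "(?E * ?Q) * (?E * ?Q) = ?E * ?Q"
    proof -
      have "(?E * ?Q) * (?E * ?Q) = ?E * ((?Q * ?E) * ?Q)"
        using E Q by (simp add: assoc_mult_mat[of _ "2^n" "2^n" _ "2^n" _ "2^n"])
      also have "\<dots> = (?E * ?E) * (?Q * ?Q)"
        unfolding EQ[symmetric] using E Q
        by (simp add: assoc_mult_mat[of _ "2^n" "2^n" _ "2^n" _ "2^n"])
      finally show ?thesis using EE insert.IH[OF fam] by simp
    qed
    ultimately show ?case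
      using insert.prems insert.hyps(2) by (simp add: born_projector_insert)
  qed
qed

lemma born_prob_nonneg:
  assumes "commuting_family n P S" and "psi \<in> carrier_vec (2^n)"
  shows "0 \<le> born_prob n P psi S s"
  unfolding born_prob_eq_expval
  using born_projector_carrier[OF assms(1)] born_projector_hermitian_idempotent[OF assms(1)]
    assms(2)
  by (intro hermitian_idempotent_expval_nonneg) auto

lemma born_prob_sum_outcome:
  assumes fam: "commuting_family n P (insert a S)" and "a \<notin> S" and psi: "psi \<in> carrier_vec (2^n)"
  shows "born_prob n P psi (insert a S) (s(a := True))
         + born_prob n P psi (insert a S) (s(a := False)) = born_prob n P psi S s"
proof -
  let ?E = "sign_projector (2^n) (pauli_mat (P a))"
  let ?Q = "born_projector n P S s"
  have famS: "commuting_family n P S" using fam by (rule commuting_family_subset) auto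
  have len: "length (P a) = n" using fam by (simp add: commuting_family_def)
  have E: "?E b \<in> carrier_mat (2^n) (2^n)" for b using len by (rule pauli_sign_projector_carrier)
  have Q: "?Q \<in> carrier_mat (2^n) (2^n)" using famS by (rule born_projector_carrier)
  have split: "born_projector n P (insert a S) (s(a := b)) = ?E b * ?Q" for b
  proof -
    have "born_projector n P S (s(a := b)) = ?Q"
      using famS \<open>a \<notin> S\<close> by (intro born_projector_cong) (auto simp: commuting_family_def)
    then show ?thesis using born_projector_insert[OF fam \<open>a \<notin> S\<close>] by simp
  qed
  have "?Q = (?E True + ?E False) * ?Q"
    using sign_projectors_sum[OF pauli_mat_carrier[of "P a"]] len Q by simp
  also have "\<dots> = ?E True * ?Q + ?E False * ?Q"
    using E Q by (simp add: add_mult_distrib_mat[of _ "2^n" "2^n"])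
  finally have "expval psi ?Q = expval psi (?E True * ?Q + ?E False * ?Q)"
    by (rule arg_cong)
  also have "\<dots> = expval psi (?E True * ?Q) + expval psi (?E False * ?Q)"
    by (rule expval_add[OF mult_carrier_mat[OF E Q] mult_carrier_mat[OF E Q] psi])
  finally show ?thesis
    unfolding born_prob_eq_expval split by (metis plus_complex.sel(1))
qed

section \<open>Marginals\<close>

definition has_marginal :: "('a \<Rightarrow> real) \<Rightarrow> 'a set \<Rightarrow> ('a \<Rightarrow> 'b) \<Rightarrow> ('b \<Rightarrow> real) \<Rightarrow> 'b set \<Rightarrow> bool" where
  "has_marginal p A f q B \<longleftrightarrow> f ` A \<subseteq> B \<and> (\<forall>y\<in>B. (\<Sum>x\<in>{x\<in>A. f x = y}. p x) = q y)"

lemma sum_has_marginal: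
  assumes "finite A" and "finite B" and "has_marginal p A f q B"
  shows "(\<Sum>x\<in>A. p x * h (f x)) = (\<Sum>y\<in>B. q y * h y)"
proof -
  have "(\<Sum>x\<in>A. p x * h (f x)) = (\<Sum>y\<in>B. \<Sum>x\<in>{x\<in>A. f x = y}. p x * h (f x))"
    using assms by (intro sum.group[symmetric]) (auto simp: has_marginal_def)
  also have "\<dots> = (\<Sum>y\<in>B. (\<Sum>x\<in>{x\<in>A. f x = y}. p x) * h y)"
    by (simp add: sum_distrib_right)
  also have "\<dots> = (\<Sum>y\<in>B. q y * h y)"
    using assms(3) by (simp add: has_marginal_def)
  finally show ?thesis .
qed

lemma has_marginal_comp:
  assumes "finite A" and "finite B"
    and pq: "has_marginal p A f q B" and qr: "has_marginal q B g r C"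
  shows "has_marginal p A (g \<circ> f) r C"
  unfolding has_marginal_def
proof
  show "(g \<circ> f) ` A \<subseteq> C" using pq qr by (auto simp: has_marginal_def)
  show "\<forall>z\<in>C. (\<Sum>x\<in>{x\<in>A. (g \<circ> f) x = z}. p x) = r z"
  proof
    fix z assume "z \<in> C"
    have "(\<Sum>x\<in>{x\<in>A. (g \<circ> f) x = z}. p x) = (\<Sum>x\<in>A. p x * of_bool (g (f x) = z))"
      using \<open>finite A\<close> by (simp add: Int_def)
    also have "\<dots> = (\<Sum>y\<in>B. q y * of_bool (g y = z))"
      by (rule sum_has_marginal[OF assms(1,2) pq])
    also have "\<dots> = r z"
      using \<open>finite B\<close> qr \<open>z \<in> C\<close> by (simp add: Int_def has_marginal_def)
    finally show "(\<Sum>x\<in>{x\<in>A. (g \<circ> f) x = z}. p x) = r z" .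
  qed
qed

lemma has_marginal_PiE:
  assumes "finite I" and "\<And>i. i \<in> I \<Longrightarrow> finite (A i)"
    and marg: "\<And>i. i \<in> I \<Longrightarrow> has_marginal (p i) (A i) (f i) (q i) (B i)"
  shows "has_marginal (\<lambda>x. \<Prod>i\<in>I. p i (x i)) (PiE I A) (\<lambda>x. \<lambda>i\<in>I. f i (x i))
           (\<lambda>y. \<Prod>i\<in>I. q i (y i)) (PiE I B)"
  unfolding has_marginal_def
proof
  show "(\<lambda>x. \<lambda>i\<in>I. f i (x i)) ` PiE I A \<subseteq> PiE I B"
    using marg by (fastforce simp: has_marginal_def PiE_iff)
  show "\<forall>y\<in>PiE I B. (\<Sum>x\<in>{x\<in>PiE I A. (\<lambda>i\<in>I. f i (x i)) = y}. \<Prod>i\<in>I. p i (x i)) = (\<Prod>i\<in>I. q i (y i))"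
  proof
    fix y assume y: "y \<in> PiE I B"
    have fiber: "{x\<in>PiE I A. (\<lambda>i\<in>I. f i (x i)) = y} = PiE I (\<lambda>i. {a\<in>A i. f i a = y i})"
      using y by (auto simp: PiE_iff fun_eq_iff extensional_def)
    have "(\<Sum>x\<in>{x\<in>PiE I A. (\<lambda>i\<in>I. f i (x i)) = y}. \<Prod>i\<in>I. p i (x i))
        = (\<Prod>i\<in>I. \<Sum>a\<in>{a\<in>A i. f i a = y i}. p i a)"
      unfolding fiber using assms(1,2) by (intro prod_sum_PiE[symmetric]) auto
    also have "\<dots> = (\<Prod>i\<in>I. q i (y i))"
    proof (rule prod.cong[OF refl])
      fix i assume "i \<in> I"
      then show "(\<Sum>a\<in>{a\<in>A i. f i a = y i}. p i a) = q i (y i)"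
        using marg[OF \<open>i \<in> I\<close>] y by (auto simp: has_marginal_def PiE_iff)
    qed
    finally show "(\<Sum>x\<in>{x\<in>PiE I A. (\<lambda>i\<in>I. f i (x i)) = y}. \<Prod>i\<in>I. p i (x i)) = (\<Prod>i\<in>I. q i (y i))" .
  qed
qed

lemma born_prob_has_marginal_insert:
  assumes "commuting_family n P (insert a S)" and "a \<notin> S" and "psi \<in> carrier_vec (2^n)"
  shows "has_marginal (born_prob n P psi (insert a S)) (PiE (insert a S) (\<lambda>_. UNIV))
           (\<lambda>s. restrict s S) (born_prob n P psi S) (PiE S (\<lambda>_. UNIV))"
  unfolding has_marginal_def
proof (intro conjI ballI)
  show "(\<lambda>s. restrict s S) ` PiE (insert a S) (\<lambda>_. UNIV) \<subseteq> PiE S (\<lambda>_. UNIV)" by auto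
  fix y :: "nat \<Rightarrow> bool" assume y: "y \<in> PiE S (\<lambda>_. UNIV)"
  have "{x \<in> PiE (insert a S) (\<lambda>_. UNIV). restrict x S = y} = {y(a := True), y(a := False)}"
  proof (intro equalityI subsetI)
    fix x assume x: "x \<in> {x \<in> PiE (insert a S) (\<lambda>_. UNIV). restrict x S = y}"
    then have "x = y(a := x a)"
      using y by (fastforce simp: fun_eq_iff PiE_iff extensional_def restrict_def)
    then show "x \<in> {y(a := True), y(a := False)}" by (cases "x a") auto
  next
    fix x assume "x \<in> {y(a := True), y(a := False)}"
    then show "x \<in> {x \<in> PiE (insert a S) (\<lambda>_. UNIV). restrict x S = y}"
      using y \<open>a \<notin> S\<close> by (auto intro: PiE_fun_upd)
  qed
  moreover have "y(a := True) \<noteq> y(a := False)" by (metis fun_upd_same)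
  ultimately show "(\<Sum>x\<in>{x \<in> PiE (insert a S) (\<lambda>_. UNIV). restrict x S = y}.
      born_prob n P psi (insert a S) x) = born_prob n P psi S y"
    using born_prob_sum_outcome[OF assms] by simp
qed

lemma born_prob_has_marginal:
  assumes fam: "commuting_family n P T" and "S \<subseteq> T" and psi: "psi \<in> carrier_vec (2^n)"
  shows "has_marginal (born_prob n P psi T) (PiE T (\<lambda>_. UNIV))
           (\<lambda>s. restrict s S) (born_prob n P psi S) (PiE S (\<lambda>_. UNIV))"
proof -
  have marg: "has_marginal (born_prob n P psi (S \<union> D)) (PiE (S \<union> D) (\<lambda>_. UNIV))
          (\<lambda>s. restrict s S) (born_prob n P psi S) (PiE S (\<lambda>_. UNIV))"
    if "finite D" and "commuting_family n P (S \<union> D)" for D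
    using that
  proof (induction D rule: finite_induct)
    case empty
    show ?case
      unfolding has_marginal_def
    proof (intro conjI ballI)
      fix y :: "nat \<Rightarrow> bool" assume "y \<in> PiE S (\<lambda>_. UNIV)"
      then have "{x \<in> PiE S (\<lambda>_. UNIV). restrict x S = y} = {y}" by auto
      then show "(\<Sum>x\<in>{x \<in> PiE (S \<union> {}) (\<lambda>_. UNIV). restrict x S = y}. born_prob n P psi (S \<union> {}) x)
          = born_prob n P psi S y"
        by simp
    qed auto
  next
    case (insert a D)
    show ?case
    proof (cases "a \<in> S")
      case True
      then show ?thesis using insert by (simp add: insert_absorb)
    next
      case False
      have eq: "S \<union> insert a D = insert a (S \<union> D)" by auto
      have fam: "commuting_family n P (insert a (S \<union> D))" using insert.prems eq by simp
      have famSD: "commuting_family n P (S \<union> D)"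
        using fam by (rule commuting_family_subset) auto
      have fin: "finite (S \<union> D)" using famSD by (simp add: commuting_family_def)
      have comp: "(\<lambda>s. restrict s S) \<circ> (\<lambda>s. restrict s (S \<union> D)) = (\<lambda>s. restrict s S)"
        by (auto simp: fun_eq_iff Int_absorb1)
      have "has_marginal (born_prob n P psi (insert a (S \<union> D)))
              (PiE (insert a (S \<union> D)) (\<lambda>_. UNIV))
              ((\<lambda>s. restrict s S) \<circ> (\<lambda>s. restrict s (S \<union> D)))
              (born_prob n P psi S) (PiE S (\<lambda>_. UNIV))"
        using fin False insert.hyps(2)
        by (intro has_marginal_comp[OF _ _ born_prob_has_marginal_insert[OF fam _ psi]
              insert.IH[OF famSD]])
          (auto intro: finite_PiE)
      from this[unfolded comp] show ?thesis unfolding eq .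
    qed
  qed
  have T: "S \<union> (T - S) = T" using \<open>S \<subseteq> T\<close> by auto
  have "finite (T - S)" using fam by (simp add: commuting_family_def)
  from marg[OF this] show ?thesis unfolding T using fam .
qed

definition restrict_outcome :: "nat \<Rightarrow> (nat \<Rightarrow> nat set) \<Rightarrow> (nat \<Rightarrow> nat)
    \<Rightarrow> (nat \<Rightarrow> nat \<Rightarrow> nat \<Rightarrow> bool) \<Rightarrow> nat \<Rightarrow> nat \<Rightarrow> nat \<Rightarrow> bool" where
  "restrict_outcome m G M \<omega> = (\<lambda>j\<in>{..<m}. \<lambda>t\<in>{..<M j}. restrict (\<omega> j t) (G j))"

lemma finite_outcomes: "(\<And>j. j < m \<Longrightarrow> finite (S j)) \<Longrightarrow> finite (outcomes m S M)"
  unfolding outcomes_def by (auto intro!: finite_PiE)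

lemma outcome_prob_has_marginal:
  assumes "\<forall>j<m. commuting_family n P (R j)" and "\<forall>j<m. G j \<subseteq> R j"
    and psi: "psi \<in> carrier_vec (2^n)"
  shows "has_marginal (outcome_prob n P psi m R M) (outcomes m R M) (restrict_outcome m G M)
           (outcome_prob n P psi m G M) (outcomes m G M)"
  unfolding outcome_prob_def outcomes_def restrict_outcome_def
proof (rule has_marginal_PiE[where p = "\<lambda>j x. \<Prod>t<M j. born_prob n P psi (R j) (x t)"
      and f = "\<lambda>j x. \<lambda>t\<in>{..<M j}. restrict (x t) (G j)"])
  fix j assume "j \<in> {..<m}"
  then have fam: "commuting_family n P (R j)" and sub: "G j \<subseteq> R j" using assms(1,2) by auto
  then have "finite (R j)" by (simp add: commuting_family_def)
  then show "finite (PiE {..<M j} (\<lambda>t. PiE (R j) (\<lambda>_. UNIV :: bool set)))"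
    by (auto intro!: finite_PiE)
  show "has_marginal (\<lambda>x. \<Prod>t<M j. born_prob n P psi (R j) (x t))
          (PiE {..<M j} (\<lambda>t. PiE (R j) (\<lambda>_. UNIV)))
          (\<lambda>x. \<lambda>t\<in>{..<M j}. restrict (x t) (G j))
          (\<lambda>y. \<Prod>t<M j. born_prob n P psi (G j) (y t)) (PiE {..<M j} (\<lambda>t. PiE (G j) (\<lambda>_. UNIV)))"
  proof (rule has_marginal_PiE[where p = "\<lambda>t. born_prob n P psi (R j)"
        and f = "\<lambda>t s. restrict s (G j)"])
    show "finite (PiE (R j) (\<lambda>_. UNIV :: bool set))"
      using \<open>finite (R j)\<close> by (simp add: finite_PiE)
    show "has_marginal (born_prob n P psi (R j)) (PiE (R j) (\<lambda>_. UNIV))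
            (\<lambda>s. restrict s (G j)) (born_prob n P psi (G j)) (PiE (G j) (\<lambda>_. UNIV))"
      by (rule born_prob_has_marginal[OF fam sub psi])
  qed simp
qed simp

section \<open>Zero-extended weights\<close>

definition zero_extend_weights ::
    "nat \<Rightarrow> (nat \<Rightarrow> nat set) \<Rightarrow> (nat \<Rightarrow> nat \<Rightarrow> real) \<Rightarrow> nat \<Rightarrow> nat \<Rightarrow> real" where
  "zero_extend_weights m G w i j = (if j \<in> Gamma m G i then w i j else 0)"

lemma sum_zero_extend_weights:
  assumes "\<forall>j<m. G j \<subseteq> R j"
  shows "(\<Sum>j\<in>Gamma m R i. zero_extend_weights m G w i j * x j) = (\<Sum>j\<in>Gamma m G i. w i j * x j)"
proof -
  have "Gamma m G i \<subseteq> Gamma m R i" using assms unfolding Gamma_def by auto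
  moreover have "finite (Gamma m R i)" unfolding Gamma_def by simp
  ultimately show ?thesis
    unfolding zero_extend_weights_def
    by (intro sum.mono_neutral_cong_right) auto
qed

lemma admissible_zero_extend_weights:
  "\<forall>j<m. G j \<subseteq> R j \<Longrightarrow> admissible_weights N m G w
     \<Longrightarrow> admissible_weights N m R (zero_extend_weights m G w)"
  unfolding admissible_weights_def using sum_zero_extend_weights[where x = "\<lambda>_. 1"] by simp

lemma estimator_zero_extend_weights:
  assumes "\<forall>j<m. G j \<subseteq> R j"
  shows "estimator N c m R M (zero_extend_weights m G w) \<omega>
       = estimator N c m G M w (restrict_outcome m G M \<omega>)"
proof -
  have "sample_mean M (restrict_outcome m G M \<omega>) i j = sample_mean M \<omega> i j"
    if "j \<in> Gamma m G i" for i j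
    using that unfolding sample_mean_def restrict_outcome_def Gamma_def by simp
  then show ?thesis
    unfolding estimator_def sum_zero_extend_weights[OF assms] by simp
qed

lemma est_variance_zero_extend_weights:
  assumes "\<forall>j<m. commuting_family n P (R j)" and "\<forall>j<m. G j \<subseteq> R j" and "psi \<in> carrier_vec (2^n)"
  shows "est_variance n N c P psi m R M (zero_extend_weights m G w)
       = est_variance n N c P psi m G M w"
proof -
  have finR: "finite (R j)" if "j < m" for j
    using assms(1) that by (simp add: commuting_family_def)
  have "finite (G j)" if "j < m" for j
    using finR[OF that] assms(2) that by (meson finite_subset)
  with finR have "(\<Sum>\<omega>\<in>outcomes m R M. outcome_prob n P psi m R M \<omega> * h (restrict_outcome m G M \<omega>))
           = (\<Sum>\<omega>\<in>outcomes m G M. outcome_prob n P psi m G M \<omega> * h \<omega>)" for h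
    by (intro sum_has_marginal outcome_prob_has_marginal finite_outcomes assms) auto
  then show ?thesis
    unfolding est_variance_def Let_def estimator_zero_extend_weights[OF assms(2)] by simp
qed

lemma est_variance_nonneg:
  assumes "\<forall>j<m. commuting_family n P (S j)" and "psi \<in> carrier_vec (2^n)"
  shows "0 \<le> est_variance n N c P psi m S M w"
  unfolding est_variance_def Let_def outcome_prob_def
  using born_prob_nonneg assms by (auto intro!: sum_nonneg mult_nonneg_nonneg prod_nonneg)

lemma overlapped_grouping_commuting_family:
  assumes "pauli_hamiltonian n N c P" and "overlapped_grouping N P m R" and "j < m"
  shows "commuting_family n P (R j)"
  using assms unfolding overlapped_grouping_def commuting_group_def pauli_hamiltonian_def
    commuting_family_def
  by (auto intro: finite_subset)

lemma admissible_uniform_weights: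
  assumes "overlapped_grouping N P m G"
  shows "admissible_weights N m G (\<lambda>i j. 1 / card (Gamma m G i))"
  unfolding admissible_weights_def
proof (intro allI impI)
  fix i assume "i < N"
  then have "Gamma m G i \<noteq> {}"
    using assms unfolding overlapped_grouping_def Gamma_def by blast
  moreover have "finite (Gamma m G i)" unfolding Gamma_def by simp
  ultimately show "(\<Sum>j\<in>Gamma m G i. 1 / real (card (Gamma m G i))) = 1" by simp
qed

theorem theorem6:
  fixes n N m :: nat
    and c :: "nat \<Rightarrow> real" and P :: "nat \<Rightarrow> pauli list"
    and psi :: "complex vec"
    and G R :: "nat \<Rightarrow> nat set" and M :: "nat \<Rightarrow> nat"
  assumes "pauli_hamiltonian n N c P"
    and "psi \<in> carrier_vec (2 ^ n)" and "psi \<bullet>c psi = 1"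
    and "grouping N P m G"
    and "repacking N P m G R"
    and "\<forall>j<m. M j > 0"
  shows "opt_variance n N c P psi m R M \<le> opt_variance n N c P psi m G M"
proof -
  \<comment> \<open>Neither \<open>psi \<bullet>c psi = 1\<close> nor \<open>M j > 0\<close> is needed: marginalisation does not use the
    normalisation, and for \<open>M j = 0\<close> all sample means are the junk value \<open>0 / 0 = 0\<close>.\<close>
  have GR: "\<forall>j<m. G j \<subseteq> R j" and fam: "\<forall>j<m. commuting_family n P (R j)"
    using assms(1,5) overlapped_grouping_commuting_family unfolding repacking_def by auto
  have "{w. admissible_weights N m G w} \<noteq> {}"
    using admissible_uniform_weights assms(4) unfolding grouping_def by blast
  moreover have "bdd_below (est_variance n N c P psi m R M ` {w. admissible_weights N m R w})"
    using est_variance_nonneg[OF fam assms(2)] by (intro bdd_belowI[where m = 0]) auto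
  moreover have "\<exists>w'\<in>{w. admissible_weights N m R w}.
      est_variance n N c P psi m R M w' \<le> est_variance n N c P psi m G M w"
    if "w \<in> {w. admissible_weights N m G w}" for w
    using that admissible_zero_extend_weights[OF GR]
      est_variance_zero_extend_weights[OF fam GR assms(2)]
    by (metis mem_Collect_eq order_refl)
  ultimately show ?thesis
    unfolding opt_variance_def by (rule cINF_mono)
qed

end
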